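(* On the triangle graph on $X=\{0,1,2\}$ over $\mathbb{F}_2$ with exterior algebra $\Omega_{min}=\Omega(\mathbb{Z}_3)$, the unique quantum metric $g=e^+\otimes e^-+e^-\otimes e^+$ has exactly four QLCs, given by $\nabla e^+=\alpha\, e^-\otimes e^-$, $\nabla e^-=\beta\, e^+\otimes e^+$ for $\alpha,\beta\in\{0,1\}$. These have curvature $R_\nabla e^\pm=\alpha\beta\,\mathrm{Vol}\otimes e^\pm$, Ricci tensors ${\rm Ricci}_+=\alpha\beta\, e^-\otimes e^+$, ${\rm Ricci}_-=\alpha\beta\, e^+\otimes e^-$ (for the lifts $i_+$, $i_-$ respectively) and Ricci scalars $S_\pm=\alpha\beta$.
   Context: $A=\mathbb{F}_2(\mathbb{Z}_3)$, functions on $\{0,1,2\}$; $(R_\pm f)(i)=f(i\pm1)$ mod 3. The calculus of the triangle graph (all arrows $i\to i\pm1$) has left-invariant basis $e^+=\sum_i i\to i+1$, $e^-=\sum_i i\to i-1$ over $A$, with $e^\pm f=(R_\pm f)e^\pm$ and ${\rm d} f=(R_+f+f)e^++(R_-f+f)e^-$. $\Omega^1\otimes_A\Omega^1$ is free with basis $e^a\otimes e^b$. $\Omega(\mathbb{Z}_3)$ is the exterior algebra generated by $A$ and $e^\pm$ with the additional relations $(e^\pm)^2=0$, $e^+\wedge e^-+e^-\wedge e^+=0$, ${\rm d} e^\pm=0$; $\Omega^2$ is spanned over $A$ by $\mathrm{Vol}=e^+\wedge e^-$. A bimodule connection is a linear $\nabla:\Omega^1\to\Omega^1\otimes_A\Omega^1$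 with $\nabla(f\omega)={\rm d} f\otimes\omega+f\nabla\omega$ and $\nabla(\omega f)=(\nabla\omega)f+\sigma(\omega\otimes{\rm d} f)$ for a bimodule map $\sigma$; it is a QLC if torsion $T_\nabla=\wedge\nabla-{\rm d}$ vanishes and $(\nabla\otimes\mathrm{id}+(\sigma\otimes\mathrm{id})(\mathrm{id}\otimes\nabla))g=0$. Curvature $R_\nabla=({\rm d}\otimes\mathrm{id}-(\wedge\otimes\mathrm{id})(\mathrm{id}\otimes\nabla))\nabla$. Inverse metric: the bimodule map with $(e^\pm,e^\mp)=1$, $(e^\pm,e^\pm)=0$. Lifts $i_\pm:\Omega^2\to\Omega^1\otimes_A\Omega^1$ are the bimodule maps with $i_\pm(\mathrm{Vol})=e^\pm\otimes e^\mp$; ${\rm Ricci}_\pm=((\ ,\ )\otimes\mathrm{id})(\mathrm{id}\otimes(i_\pm\otimes\mathrm{id})R_\nabla)g$ and $S_\pm=(\ ,\ ){\rm Ricci}_\pm$. *)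

theory Defs
  imports Main "HOL-Library.Z2" "HOL-Library.Numeral_Type" "HOL-Library.Function_Algebras"
begin

text \<open>The field is F_2 (type bit), the group Z_3 is the numeral type 3.
  A sign a :: bool stands for the generator e^+ (True) or e^- (False).
  All modules in the calculus are free LEFT A-modules on the stated bases, so elements
  are represented by their left coefficient functions:
  Omega^1             : bool => A           (omega = sum_a omega(a) e^a)
  Omega^1 (x) Omega^1 : bool => bool => A   (sum c(a,b) e^a (x) e^b)
  Omega^1 tensor cube : bool => bool => bool => A
  Omega^2             : A                   (coefficient of Vol = e^+ wedge e^-)
  Omega^2 (x) Omega^1 : bool => A           (sum r(b) Vol (x) e^b)\<close>

type_synonym A = "3 \<Rightarrow> bit"
type_synonym om1 = "bool \<Rightarrow> A"
type_synonym om11 = "bool \<Rightarrow> bool \<Rightarrow> A"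
type_synonym om111 = "bool \<Rightarrow> bool \<Rightarrow> bool \<Rightarrow> A"
type_synonym om1111 = "bool \<Rightarrow> bool \<Rightarrow> bool \<Rightarrow> bool \<Rightarrow> A"
type_synonym om2 = A
type_synonym om21 = "bool \<Rightarrow> A"

definition sh :: "bool \<Rightarrow> 3" where "sh a = (if a then 1 else -1)"

definition Rsh :: "bool \<Rightarrow> A \<Rightarrow> A" where "Rsh a f = (\<lambda>i. f (i + sh a))"

definition dA :: "A \<Rightarrow> om1" where "dA f = (\<lambda>a i. Rsh a f i + f i)"

definition E :: "bool \<Rightarrow> om1" where "E a = (\<lambda>b i. if b = a then 1 else 0)"
definition EE :: "bool \<Rightarrow> bool \<Rightarrow> om11" where
  "EE a b = (\<lambda>x y i. if x = a \<and> y = b then 1 else 0)"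
definition EV :: "bool \<Rightarrow> om21" where "EV b = (\<lambda>y i. if y = b then 1 else 0)"

text \<open>bimodule structure: left multiplication is pointwise on coefficients,
  right multiplication uses e^a f = (R_a f) e^a\<close>
definition lmul1 :: "A \<Rightarrow> om1 \<Rightarrow> om1" where "lmul1 f w = (\<lambda>a i. f i * w a i)"
definition rmul1 :: "om1 \<Rightarrow> A \<Rightarrow> om1" where "rmul1 w f = (\<lambda>a i. w a i * Rsh a f i)"
definition lmul2 :: "A \<Rightarrow> om11 \<Rightarrow> om11" where "lmul2 f c = (\<lambda>a b i. f i * c a b i)"
definition rmul2 :: "om11 \<Rightarrow> A \<Rightarrow> om11" where
  "rmul2 c f = (\<lambda>a b i. c a b i * Rsh a (Rsh b f) i)"

text \<open>tensor products over A of elements given by left coefficients: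
  (f e^a) (x) (g e^b) = f (R_a g) e^a (x) e^b\<close>
definition tens11 :: "om1 \<Rightarrow> om1 \<Rightarrow> om11" where
  "tens11 w v = (\<lambda>a b i. w a i * Rsh a (v b) i)"
definition tens12 :: "om1 \<Rightarrow> om11 \<Rightarrow> om111" where
  "tens12 w c = (\<lambda>a b b' i. w a i * Rsh a (c b b') i)"
definition tens21 :: "om11 \<Rightarrow> om1 \<Rightarrow> om111" where
  "tens21 c v = (\<lambda>a b b' i. c a b i * Rsh a (Rsh b (v b')) i)"
definition tens13 :: "om1 \<Rightarrow> om111 \<Rightarrow> om1111" where
  "tens13 w T = (\<lambda>a p q b' i. w a i * Rsh a (T p q b') i)"

text \<open>wedge product of generators: (e^a)^2 = 0, e^+ e^- = Vol, e^- e^+ = - Vol\<close>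
definition wsign :: "bool \<Rightarrow> bool \<Rightarrow> bit" where
  "wsign a b = (if a = b then 0 else if a then 1 else -1)"
definition wedge11 :: "om11 \<Rightarrow> om2" where
  "wedge11 c = (\<lambda>i. \<Sum>a\<in>UNIV. \<Sum>b\<in>UNIV. c a b i * wsign a b)"
definition wedge_id :: "om111 \<Rightarrow> om21" where
  "wedge_id T = (\<lambda>b' i. \<Sum>a\<in>UNIV. \<Sum>b\<in>UNIV. T a b b' i * wsign a b)"

text \<open>exterior derivative on 1-forms: d(f e^a) = df wedge e^a, since d e^a = 0\<close>
definition d1 :: "om1 \<Rightarrow> om2" where
  "d1 w = wedge11 (\<lambda>b a. dA (w a) b)"

definition sigma_id :: "(om11 \<Rightarrow> om11) \<Rightarrow> om111 \<Rightarrow> om111" where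
  "sigma_id \<sigma> T = (\<lambda>a b b'. \<sigma> (\<lambda>x y. T x y b') a b)"

definition gmet :: om11 where "gmet = EE True False + EE False True"
definition ginv :: "bool \<Rightarrow> bool \<Rightarrow> bit" where "ginv a b = (if a \<noteq> b then 1 else 0)"
definition pair :: "om11 \<Rightarrow> A" where
  "pair c = (\<lambda>i. \<Sum>a\<in>UNIV. \<Sum>b\<in>UNIV. c a b i * ginv a b)"
definition pair_id :: "om1111 \<Rightarrow> om11" where
  "pair_id T = (\<lambda>q b' i. \<Sum>a\<in>UNIV. \<Sum>p\<in>UNIV. T a p q b' i * ginv a p)"

definition additive :: "('a::plus \<Rightarrow> 'b::plus) \<Rightarrow> bool" where
  "additive F \<longleftrightarrow> (\<forall>x y. F (x + y) = F x + F y)"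

definition left_connection :: "(om1 \<Rightarrow> om11) \<Rightarrow> bool" where
  "left_connection nb \<longleftrightarrow> additive nb \<and>
     (\<forall>k::bit. \<forall>w. nb (lmul1 (\<lambda>_. k) w) = lmul2 (\<lambda>_. k) (nb w)) \<and>
     (\<forall>f w. nb (lmul1 f w) = tens11 (dA f) w + lmul2 f (nb w))"

definition bimodule_map2 :: "(om11 \<Rightarrow> om11) \<Rightarrow> bool" where
  "bimodule_map2 \<sigma> \<longleftrightarrow> additive \<sigma> \<and>
     (\<forall>f c. \<sigma> (lmul2 f c) = lmul2 f (\<sigma> c)) \<and> (\<forall>f c. \<sigma> (rmul2 c f) = rmul2 (\<sigma> c) f)"

definition right_leibniz :: "(om1 \<Rightarrow> om11) \<Rightarrow> (om11 \<Rightarrow> om11) \<Rightarrow> bool" where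
  "right_leibniz nb \<sigma> \<longleftrightarrow> (\<forall>w f. nb (rmul1 w f) = rmul2 (nb w) f + \<sigma> (tens11 w (dA f)))"

definition torsion_free :: "(om1 \<Rightarrow> om11) \<Rightarrow> bool" where
  "torsion_free nb \<longleftrightarrow> (\<forall>w. wedge11 (nb w) - d1 w = 0)"

text \<open>(nabla (x) id + (sigma (x) id)(id (x) nabla)) c, writing c = sum_b (c(.,b)) (x) e^b\<close>
definition met_deriv :: "(om1 \<Rightarrow> om11) \<Rightarrow> (om11 \<Rightarrow> om11) \<Rightarrow> om11 \<Rightarrow> om111" where
  "met_deriv nb \<sigma> c = (\<Sum>b\<in>UNIV. tens21 (nb (\<lambda>a. c a b)) (E b)
        + sigma_id \<sigma> (tens12 (\<lambda>a. c a b) (nb (E b))))"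

definition QLC :: "(om1 \<Rightarrow> om11) \<Rightarrow> bool" where
  "QLC nb \<longleftrightarrow> left_connection nb \<and> torsion_free nb \<and>
     (\<exists>\<sigma>. bimodule_map2 \<sigma> \<and> right_leibniz nb \<sigma> \<and> met_deriv nb \<sigma> gmet = 0)"

definition conn :: "bit \<Rightarrow> bit \<Rightarrow> om1 \<Rightarrow> om11" where
  "conn \<alpha> \<beta> w = (\<Sum>a\<in>UNIV. tens11 (dA (w a)) (E a)
        + lmul2 (w a) (if a then lmul2 (\<lambda>_. \<alpha>) (EE False False) else lmul2 (\<lambda>_. \<beta>) (EE True True)))"

text \<open>R = (d (x) id - (wedge (x) id)(id (x) nabla)) nabla, with
  nabla w = sum_b xi_b (x) e^b\<close>
definition curv :: "(om1 \<Rightarrow> om11) \<Rightarrow> om1 \<Rightarrow> om21" where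
  "curv nb w = (\<Sum>b\<in>UNIV. lmul1 (d1 (\<lambda>a. nb w a b)) (EV b)
        - wedge_id (tens12 (\<lambda>a. nb w a b) (nb (E b))))"

text \<open>the lift i(Vol) = sum L(p,q) e^p (x) e^q, applied as i (x) id\<close>
definition lift_id :: "(bool \<Rightarrow> bool \<Rightarrow> bit) \<Rightarrow> om21 \<Rightarrow> om111" where
  "lift_id L r = (\<lambda>p q b' i. L p q * r b' i)"
definition iplus :: "bool \<Rightarrow> bool \<Rightarrow> bit" where
  "iplus p q = (if p \<and> \<not> q then 1 else 0)"
definition iminus :: "bool \<Rightarrow> bool \<Rightarrow> bit" where
  "iminus p q = (if \<not> p \<and> q then 1 else 0)"

text \<open>Ricci = (( , ) (x) id)(id (x) (i (x) id) R) g, writing g = sum_b g(.,b) (x) e^b\<close>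
definition ricci :: "(bool \<Rightarrow> bool \<Rightarrow> bit) \<Rightarrow> (om1 \<Rightarrow> om11) \<Rightarrow> om11" where
  "ricci L nb = pair_id (\<Sum>b\<in>UNIV. tens13 (\<lambda>a. gmet a b) (lift_id L (curv nb (E b))))"

definition ricci_scalar :: "(bool \<Rightarrow> bool \<Rightarrow> bit) \<Rightarrow> (om1 \<Rightarrow> om11) \<Rightarrow> A" where
  "ricci_scalar L nb = pair (ricci L nb)"

end

(* A left connection is determined by its Christoffel symbols nabla e^+ and nabla e^- in
   Omega^1 (x) Omega^1, and it is torsion free iff both are symmetric.  A bimodule map sigma
   commutes with multiplication by delta functions, so it preserves the Z_3-degree of
   e^a (x) e^b; testing the right Leibniz rule on delta functions then expresses sigma
   completely through nabla.  With this sigma, four components of the metric compatibility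
   equation read x + y + x y = 0 or x + y = 0 over F_2: they kill every Christoffel symbol
   except the e^- (x) e^- part of nabla e^+ and the e^+ (x) e^+ part of nabla e^-, and make
   these two translation invariant on Z_3, i.e. constants alpha and beta.  Conversely each of
   the four resulting connections is a QLC with sigma the flip, and its curvature and Ricci
   tensors are direct computations. *)

theory Submission
  imports Defs
begin

lemma Z3_cases: "(i::3) = 0 \<or> i = 1 \<or> i = 2"
proof (cases i)
  case (of_int z)
  then have "z = 0 \<or> z = 1 \<or> z = 2" by auto
  then show ?thesis using of_int by auto
qed

lemma Z3_arith:
  "(1::3) + 1 = 2" "(2::3) + 1 = 0" "(1::3) + 2 = 0" "(2::3) + 2 = 1" "- (1::3) = 2" "- (2::3) = 1"
  "(0::3) \<noteq> 1" "(0::3) \<noteq> 2" "(1::3) \<noteq> 2" "(1::3) \<noteq> 0" "(2::3) \<noteq> 0" "(2::3) \<noteq> 1"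
  "(3::3) = 0" "(4::3) = 1"
  by simp_all

lemma Z3_periodic_eq_const:
  fixes f :: "3 \<Rightarrow> 'a"
  assumes "c \<noteq> 0" and "\<And>i. f (i + c) = f i"
  shows "f i = f 0"
  using Z3_cases[of c] Z3_cases[of i] assms(1) assms(2)[of 0] assms(2)[of 1] assms(2)[of 2]
  by (auto simp: Z3_arith)

lemma bit_cases_eq: "(x::bit) = 0 \<or> x = 1"
  by (cases x) simp_all

lemma bit_simps:
  fixes x y :: bit
  shows "x + x = 0" "x + (x + y) = y" "x * x = x" "x * (x * y) = x * y" "- x = x" "x - y = x + y"
  using bit_cases_eq[of x] bit_cases_eq[of y] by auto

lemma bit_add_eq_0_iff: "(x::bit) + y = 0 \<longleftrightarrow> x = y"
  using bit_cases_eq[of x] bit_cases_eq[of y] by auto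

lemma bit_add_add_mult_eq_0_iff: "(x::bit) + (y + x * y) = 0 \<longleftrightarrow> x = 0 \<and> y = 0"
  using bit_cases_eq[of x] bit_cases_eq[of y] by auto

lemma sum_UNIV_bool: "(\<Sum>a\<in>UNIV. f a) = f True + f False" for f :: "bool \<Rightarrow> 'a::comm_monoid_add"
  by (simp add: UNIV_bool add.commute)

lemma sh_simps: "sh True = 1" "sh False = 2"
  by (simp_all add: sh_def)

lemma sh_nonzero: "sh a \<noteq> 0"
  by (cases a) (simp_all add: sh_simps)

lemma sh_eq_iff: "sh a = sh b \<longleftrightarrow> a = b"
  by (cases a; cases b) (simp_all add: sh_simps)

lemmas bit_ring_simps = add.assoc add.commute add.left_commute mult.assoc mult.commute mult.left_commute
  distrib_left distrib_right bit_simps mult_1 mult_1_right mult_zero_left mult_zero_right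
  add_0 add_0_right simp_thms

lemmas coefficient_simps = fun_eq_iff all_bool_eq sum_UNIV_bool plus_fun_apply zero_fun_apply
  fun_diff_def if_True if_False simp_thms sh_simps add.assoc Z3_arith add_0_right add_0
  bit_simps mult_1 mult_1_right mult_zero_left mult_zero_right

lemmas calculus_defs = Rsh_def dA_def E_def EE_def EV_def lmul1_def rmul1_def lmul2_def rmul2_def
  tens11_def tens12_def tens21_def tens13_def wsign_def wedge11_def wedge_id_def d1_def sigma_id_def
  gmet_def ginv_def pair_def pair_id_def curv_def lift_id_def iplus_def iminus_def ricci_def
  ricci_scalar_def

(* nabla w = sum_y (d w_y (x) e^y + w_y nabla e^y) with nabla e^+ = X, nabla e^- = Y; the
   e^x-coefficient of d w_y at i is w_y (i + sh x) + w_y i. *)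
definition leibniz_conn :: "om11 \<Rightarrow> om11 \<Rightarrow> om1 \<Rightarrow> om11" where
  "leibniz_conn X Y w =
     (\<lambda>x y i. w y (i + sh x) + w y i + w True i * X x y i + w False i * Y x y i)"

lemma left_connection_eq_leibniz_conn:
  assumes "left_connection nb"
  shows "nb = leibniz_conn (nb (E True)) (nb (E False))"
proof
  fix w
  have w: "w = lmul1 (w True) (E True) + lmul1 (w False) (E False)"
    by (simp add: fun_eq_iff all_bool_eq lmul1_def E_def)
  have "nb w = nb (lmul1 (w True) (E True)) + nb (lmul1 (w False) (E False))"
    using assms unfolding left_connection_def additive_def by (metis w)
  also have "\<dots> = tens11 (dA (w True)) (E True) + lmul2 (w True) (nb (E True))
     + (tens11 (dA (w False)) (E False) + lmul2 (w False) (nb (E False)))"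
    using assms unfolding left_connection_def by simp
  also have "\<dots> = leibniz_conn (nb (E True)) (nb (E False)) w"
    unfolding leibniz_conn_def
    by (simp only: coefficient_simps calculus_defs; (simp only: bit_ring_simps)?)
  finally show "nb w = leibniz_conn (nb (E True)) (nb (E False)) w" .
qed

lemma left_connection_leibniz_conn: "left_connection (leibniz_conn X Y)"
  unfolding left_connection_def additive_def leibniz_conn_def
  by (simp only: coefficient_simps calculus_defs; (simp only: bit_ring_simps)?)

lemma leibniz_conn_E: "leibniz_conn X Y (E a) = (if a then X else Y)"
  unfolding leibniz_conn_def by (cases a; simp only: coefficient_simps calculus_defs)

lemma torsion_free_leibniz_conn_iff:
  "torsion_free (leibniz_conn X Y) \<longleftrightarrow> X True False = X False True \<and> Y True False = Y False True"
proof -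
  let ?tX = "\<lambda>i. X True False i + X False True i" and ?tY = "\<lambda>i. Y True False i + Y False True i"
  have "torsion_free (leibniz_conn X Y) \<longleftrightarrow> (\<forall>w i. w True i * ?tX i + w False i * ?tY i = 0)"
    unfolding torsion_free_def leibniz_conn_def
    by (simp only: coefficient_simps calculus_defs; simp only: bit_ring_simps)
  also have "\<dots> \<longleftrightarrow> (\<forall>i. ?tX i = 0 \<and> ?tY i = 0)"
  proof (intro iffI allI conjI)
    fix i
    assume vanish: "\<forall>w i. w True i * ?tX i + w False i * ?tY i = 0"
    show "?tX i = 0"
      using vanish[rule_format, of "\<lambda>a _. if a then 1 else 0" i] by simp
    show "?tY i = 0"
      using vanish[rule_format, of "\<lambda>a _. if a then 0 else 1" i] by simp
  qed simp
  finally show ?thesis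
    unfolding bit_add_eq_0_iff fun_eq_iff by blast
qed

lemma conn_eq_leibniz_conn:
  "conn \<alpha> \<beta> = leibniz_conn (lmul2 (\<lambda>_. \<alpha>) (EE False False)) (lmul2 (\<lambda>_. \<beta>) (EE True True))"
  unfolding leibniz_conn_def conn_def
  by (simp only: coefficient_simps calculus_defs; (simp only: bit_ring_simps)?)

definition tensor_flip :: "om11 \<Rightarrow> om11" where
  "tensor_flip c = (\<lambda>x y i. c y x i)"

lemma bimodule_map2_tensor_flip: "bimodule_map2 tensor_flip"
  unfolding bimodule_map2_def additive_def tensor_flip_def
  by (simp only: coefficient_simps calculus_defs; (simp only: bit_ring_simps)?)

lemma right_leibniz_conn_flip: "right_leibniz (conn \<alpha> \<beta>) tensor_flip"
  unfolding right_leibniz_def tensor_flip_def conn_eq_leibniz_conn leibniz_conn_def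
  by (simp only: coefficient_simps calculus_defs; (simp only: bit_ring_simps)?)

lemma met_deriv_conn_flip: "met_deriv (conn \<alpha> \<beta>) tensor_flip gmet = 0"
  unfolding met_deriv_def tensor_flip_def conn_eq_leibniz_conn leibniz_conn_def
  by (simp only: coefficient_simps calculus_defs; (simp only: bit_ring_simps)?)

lemma torsion_free_conn: "torsion_free (conn \<alpha> \<beta>)"
  unfolding conn_eq_leibniz_conn torsion_free_leibniz_conn_iff
  by (simp only: coefficient_simps calculus_defs)

lemma QLC_conn: "QLC (conn \<alpha> \<beta>)"
  unfolding QLC_def
  using left_connection_leibniz_conn torsion_free_conn bimodule_map2_tensor_flip
    right_leibniz_conn_flip met_deriv_conn_flip
  by (auto simp only: conn_eq_leibniz_conn)

lemma curv_conn: "curv (conn \<alpha> \<beta>) (E a) = lmul1 (\<lambda>_. \<alpha> * \<beta>) (EV a)"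
  unfolding conn_eq_leibniz_conn leibniz_conn_def
  by (cases a; simp only: coefficient_simps calculus_defs; (simp only: bit_ring_simps)?)

lemma ricci_conn:
  "ricci iplus (conn \<alpha> \<beta>) = lmul2 (\<lambda>_. \<alpha> * \<beta>) (EE False True)"
  "ricci iminus (conn \<alpha> \<beta>) = lmul2 (\<lambda>_. \<alpha> * \<beta>) (EE True False)"
  unfolding conn_eq_leibniz_conn leibniz_conn_def
  by (simp only: coefficient_simps calculus_defs; (simp only: bit_ring_simps)?)+

lemma ricci_scalar_conn:
  "ricci_scalar iplus (conn \<alpha> \<beta>) = (\<lambda>_. \<alpha> * \<beta>)"
  "ricci_scalar iminus (conn \<alpha> \<beta>) = (\<lambda>_. \<alpha> * \<beta>)"
  unfolding ricci_scalar_def ricci_conn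
  by (simp only: coefficient_simps calculus_defs; (simp only: bit_ring_simps)?)+

lemma bimodule_map2_expand:
  assumes "bimodule_map2 \<sigma>"
  shows "\<sigma> c = (\<lambda>x y i. \<Sum>a\<in>UNIV. \<Sum>b\<in>UNIV. c a b i * \<sigma> (EE a b) x y i)"
proof -
  have c: "c = lmul2 (c True True) (EE True True) + lmul2 (c True False) (EE True False)
      + lmul2 (c False True) (EE False True) + lmul2 (c False False) (EE False False)"
    by (simp only: coefficient_simps calculus_defs; (simp only: bit_ring_simps)?)
  have "\<sigma> c = \<sigma> (lmul2 (c True True) (EE True True)) + \<sigma> (lmul2 (c True False) (EE True False))
      + \<sigma> (lmul2 (c False True) (EE False True)) + \<sigma> (lmul2 (c False False) (EE False False))"
    using assms unfolding bimodule_map2_def additive_def by (metis c)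
  also have "\<dots> = lmul2 (c True True) (\<sigma> (EE True True)) + lmul2 (c True False) (\<sigma> (EE True False))
      + lmul2 (c False True) (\<sigma> (EE False True)) + lmul2 (c False False) (\<sigma> (EE False False))"
    using assms unfolding bimodule_map2_def by simp
  finally show ?thesis
    by (simp only: fun_eq_iff lmul2_def sum_UNIV_bool plus_fun_apply add.assoc simp_thms)
qed

lemma bimodule_map2_degree:
  assumes "bimodule_map2 \<sigma>" and "sh x + sh y \<noteq> sh a + sh b"
  shows "\<sigma> (EE a b) x y i = 0"
proof -
  define \<delta> :: A where "\<delta> = (\<lambda>j. if j = i + sh a + sh b then 1 else 0)"
  have "rmul2 (EE a b) \<delta> = lmul2 (\<lambda>j. \<delta> (j + sh a + sh b)) (EE a b)"
    by (auto simp: fun_eq_iff rmul2_def lmul2_def EE_def Rsh_def add.assoc add.commute)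
  then have "lmul2 (\<lambda>j. \<delta> (j + sh a + sh b)) (\<sigma> (EE a b)) = rmul2 (\<sigma> (EE a b)) \<delta>"
    using assms(1) unfolding bimodule_map2_def by metis
  then have "\<delta> (i + sh a + sh b) * \<sigma> (EE a b) x y i = \<sigma> (EE a b) x y i * \<delta> (i + sh x + sh y)"
    unfolding lmul2_def rmul2_def Rsh_def by (metis add.assoc add.commute)
  moreover have "i + sh x + sh y \<noteq> i + sh a + sh b"
    using assms(2) by (simp add: add.assoc)
  ultimately show ?thesis
    by (simp add: \<delta>_def)
qed

lemma right_leibniz_sigma_EE:
  assumes "left_connection nb" and "bimodule_map2 \<sigma>" and "right_leibniz nb \<sigma>"
  shows "\<sigma> (EE a b) x y i =
    (if sh x + sh y = sh a + sh b then of_bool (x = b \<and> y = a) + nb (E a) x y i else 0)"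
proof (cases "sh x + sh y = sh a + sh b")
  case False
  then show ?thesis using bimodule_map2_degree[OF assms(2)] by simp
next
  case degree: True
  txt \<open>Apply the right Leibniz rule to the delta function at i + sh a: then e^a \<delta> is the
    delta function at i times e^a, and d \<delta> pairs e^a with every e^b at i, of which only
    the given b has the right degree.\<close>
  define \<delta> :: A where "\<delta> = (\<lambda>j. if j = i + sh a then 1 else 0)"
  obtain X Y where nb: "nb = leibniz_conn X Y"
    using left_connection_eq_leibniz_conn[OF assms(1)] by blast
  have "nb (rmul1 (E a) \<delta>) x y i = rmul2 (nb (E a)) \<delta> x y i + \<sigma> (tens11 (E a) (dA \<delta>)) x y i"
    using assms(3) unfolding right_leibniz_def by simp
  moreover have "nb (rmul1 (E a) \<delta>) x y i = of_bool (y = a) + nb (E a) x y i"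
    unfolding nb leibniz_conn_E
    by (cases a; cases y; simp add: leibniz_conn_def rmul1_def E_def Rsh_def \<delta>_def sh_nonzero)
  moreover have "rmul2 (nb (E a)) \<delta> x y i = 0"
    using degree sh_nonzero[of b]
    by (simp add: rmul2_def Rsh_def \<delta>_def add.assoc add.commute)
  moreover have "\<sigma> (tens11 (E a) (dA \<delta>)) x y i = \<sigma> (EE a True) x y i + \<sigma> (EE a False) x y i"
    unfolding bimodule_map2_expand[OF assms(2), of "tens11 (E a) (dA \<delta>)"]
    by (cases a; simp add: sum_UNIV_bool tens11_def E_def dA_def Rsh_def \<delta>_def sh_nonzero)
  moreover have "\<sigma> (EE a (\<not> b)) x y i = 0"
    using degree bimodule_map2_degree[OF assms(2)] sh_eq_iff[of b "\<not> b"] by auto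
  ultimately have "\<sigma> (EE a b) x y i = of_bool (y = a) + nb (E a) x y i"
    by (cases b) (simp_all add: bit_simps)
  moreover have "y = a \<Longrightarrow> x = b"
    using degree by (simp add: sh_eq_iff)
  ultimately show ?thesis
    using degree by auto
qed

(* sigma (e^a (x) e^b) is the degree-preserving part of e^b (x) e^a + nabla e^a. *)
definition braiding :: "(om1 \<Rightarrow> om11) \<Rightarrow> om11 \<Rightarrow> om11" where
  "braiding nb c = (\<lambda>x y i. \<Sum>a\<in>UNIV. \<Sum>b\<in>UNIV. c a b i *
     (if sh x + sh y = sh a + sh b then of_bool (x = b \<and> y = a) + nb (E a) x y i else 0))"

lemma right_leibniz_sigma_eq_braiding:
  assumes "left_connection nb" and "bimodule_map2 \<sigma>" and "right_leibniz nb \<sigma>"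
  shows "\<sigma> = braiding nb"
proof (intro ext)
  fix c x y i
  show "\<sigma> c x y i = braiding nb c x y i"
    by (simp only: bimodule_map2_expand[OF assms(2), of c] braiding_def
        right_leibniz_sigma_EE[OF assms])
qed

lemma met_deriv_leibniz_conn_braiding_eq_0D:
  assumes "met_deriv (leibniz_conn X Y) (braiding (leibniz_conn X Y)) gmet = 0"
  shows "X True True i = 0" "Y True False i = 0" "Y False False i = 0" "X False True i = 0"
    and "Y True True (i + 1) = Y True True i" "X False False (i + 2) = X False False i"
proof -
  have component: "met_deriv (leibniz_conn X Y) (braiding (leibniz_conn X Y)) gmet a b b' j = 0"
    for a b b' j
    using assms by simp
  have ppm: "X True True j + (Y True False (j + 1) + X True True j * Y True False (j + 1)) = 0" for j
    using component[of True True False j] unfolding met_deriv_def braiding_def leibniz_conn_E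
    by (simp only: coefficient_simps calculus_defs leibniz_conn_def of_bool_eq;
        (simp only: bit_ring_simps)?)
  have mmp: "Y False False j + (X False True (j + 2) + Y False False j * X False True (j + 2)) = 0" for j
    using component[of False False True j] unfolding met_deriv_def braiding_def leibniz_conn_E
    by (simp only: coefficient_simps calculus_defs leibniz_conn_def of_bool_eq;
        (simp only: bit_ring_simps)?)
  have ppp: "Y True True j + (Y True True (j + 1) + X True True j * Y True True (j + 1)) = 0" for j
    using component[of True True True j] unfolding met_deriv_def braiding_def leibniz_conn_E
    by (simp only: coefficient_simps calculus_defs leibniz_conn_def of_bool_eq;
        (simp only: bit_ring_simps)?)
  have mmm: "X False False j + (X False False (j + 2) + Y False False j * X False False (j + 2)) = 0" for j
    using component[of False False False j] unfolding met_deriv_def braiding_def leibniz_conn_E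
    by (simp only: coefficient_simps calculus_defs leibniz_conn_def of_bool_eq;
        (simp only: bit_ring_simps)?)
  from ppm[of i] ppm[of "i + 2"] show "X True True i = 0" "Y True False i = 0"
    by (simp_all only: bit_add_add_mult_eq_0_iff add.assoc Z3_arith add_0_right)
  from mmp[of i] mmp[of "i + 1"] show "Y False False i = 0" "X False True i = 0"
    by (simp_all only: bit_add_add_mult_eq_0_iff add.assoc Z3_arith add_0_right)
  from ppp[of i] \<open>X True True i = 0\<close> show "Y True True (i + 1) = Y True True i"
    by (metis mult_zero_left add_0_right bit_add_eq_0_iff)
  from mmm[of i] \<open>Y False False i = 0\<close> show "X False False (i + 2) = X False False i"
    by (metis mult_zero_left add_0_right bit_add_eq_0_iff)
qed

lemma QLC_imp_conn:
  assumes "QLC nb"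
  shows "\<exists>\<alpha> \<beta>. nb = conn \<alpha> \<beta>"
proof -
  obtain \<sigma> where lc: "left_connection nb" and tf: "torsion_free nb" and bm: "bimodule_map2 \<sigma>"
    and rl: "right_leibniz nb \<sigma>" and mc: "met_deriv nb \<sigma> gmet = 0"
    using assms unfolding QLC_def by blast
  define X Y where "X = nb (E True)" and "Y = nb (E False)"
  have nb: "nb = leibniz_conn X Y"
    unfolding X_def Y_def by (rule left_connection_eq_leibniz_conn[OF lc])
  have sym: "X True False = X False True" "Y True False = Y False True"
    using tf unfolding nb torsion_free_leibniz_conn_iff by simp_all
  have "met_deriv (leibniz_conn X Y) (braiding (leibniz_conn X Y)) gmet = 0"
    using mc unfolding right_leibniz_sigma_eq_braiding[OF lc bm rl] nb .
  note christoffel = met_deriv_leibniz_conn_braiding_eq_0D[OF this]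
  have "X = lmul2 (\<lambda>_. X False False 0) (EE False False)"
  proof (intro ext)
    fix x y i
    have "X False False i = X False False 0"
      by (rule Z3_periodic_eq_const[of 2]) (simp_all add: christoffel)
    then show "X x y i = lmul2 (\<lambda>_. X False False 0) (EE False False) x y i"
      using sym(1) christoffel(1,4) by (cases x; cases y) (simp_all add: lmul2_def EE_def)
  qed
  moreover have "Y = lmul2 (\<lambda>_. Y True True 0) (EE True True)"
  proof (intro ext)
    fix x y i
    have "Y True True i = Y True True 0"
      by (rule Z3_periodic_eq_const[of 1]) (simp_all add: christoffel)
    then show "Y x y i = lmul2 (\<lambda>_. Y True True 0) (EE True True) x y i"
      using sym(2) christoffel(2,3) by (cases x; cases y) (simp_all add: lmul2_def EE_def)
  qed
  ultimately show ?thesis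
    unfolding nb conn_eq_leibniz_conn by metis
qed

lemma conn_inj:
  assumes "conn \<alpha> \<beta> = conn \<alpha>' \<beta>'"
  shows "\<alpha> = \<alpha>' \<and> \<beta> = \<beta>'"
proof -
  have "conn \<alpha> \<beta> (E True) False False 0 = \<alpha>" "conn \<alpha> \<beta> (E False) True True 0 = \<beta>" for \<alpha> \<beta>
    by (simp_all add: conn_eq_leibniz_conn leibniz_conn_E lmul2_def EE_def)
  then show ?thesis
    using assms by metis
qed

lemma card_conn: "card {conn \<alpha> \<beta> | \<alpha> \<beta>. True} = 4"
proof -
  have "{0, 1::bit} = UNIV"
    using bit_cases_eq by auto
  then have "{conn \<alpha> \<beta> | \<alpha> \<beta>. True} = case_prod conn ` ({0, 1} \<times> {0, 1})"
    by auto
  moreover have "inj_on (case_prod conn) ({0, 1} \<times> {0, 1})"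
    using conn_inj by (auto simp: inj_on_def)
  ultimately show ?thesis
    by (simp add: card_image card_cartesian_product)
qed

theorem proposition4p4:
  shows "{nb. QLC nb} = {conn \<alpha> \<beta> | \<alpha> \<beta>. True}
    \<and> card {nb. QLC nb} = 4
    \<and> (\<forall>\<alpha> \<beta>.
         (\<forall>a. curv (conn \<alpha> \<beta>) (E a) = lmul1 (\<lambda>_. \<alpha> * \<beta>) (EV a))
       \<and> ricci iplus (conn \<alpha> \<beta>) = lmul2 (\<lambda>_. \<alpha> * \<beta>) (EE False True)
       \<and> ricci iminus (conn \<alpha> \<beta>) = lmul2 (\<lambda>_. \<alpha> * \<beta>) (EE True False)
       \<and> ricci_scalar iplus (conn \<alpha> \<beta>) = (\<lambda>_. \<alpha> * \<beta>)
       \<and> ricci_scalar iminus (conn \<alpha> \<beta>) = (\<lambda>_. \<alpha> * \<beta>))"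
proof -
  have QLCs: "{nb. QLC nb} = {conn \<alpha> \<beta> | \<alpha> \<beta>. True}"
    using QLC_conn QLC_imp_conn by blast
  show ?thesis
    unfolding QLCs using card_conn curv_conn ricci_conn ricci_scalar_conn by blast
qed

end
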